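(* As formal power series in $y$, \[ \sum_{n\ge0}R_n(x)y^n=\frac{1+y+x^3y^3-xy^4}{1-(1+x+x^2)y^2+x^2y^4}+xy . \]
   Context: For $n\ge1$ let $\Xi_n$ be the poset on $\{x_1,\dots,x_n\}$ whose cover relations are exactly: $x_2\prec x_1$, $x_3\prec x_2$, and for $3\le i\le n-1$, $x_i\prec x_{i+1}$ if $i$ is odd and $x_{i+1}\prec x_i$ if $i$ is even (so $x_1>x_2>x_3<x_4>x_5<\cdots$). A filter of a poset is an up-closed subset. $\Omega_n$ is the lattice of filters of $\Xi_n$ under reverse inclusion; $\Omega_0$ is the one-element lattice. $R_n(x)=\sum_{F\in\Omega_n}x^{\,n-|F|}$ is the rank generating function of $\Omega_n$, with $R_0(x)=1$. *)

theory Defs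
  imports "HOL-Computational_Algebra.Formal_Power_Series"
begin

text \<open>Element x_i of Xi_n is represented by the index i, 1 <= i <= n.
  A pair (i, j) in xi_cover n means x_i is covered by x_j (x_i < x_j).\<close>
definition xi_cover :: "nat \<Rightarrow> (nat \<times> nat) set" where
  "xi_cover n =
     {(2, 1) | _::unit. 2 \<le> n} \<union> {(3, 2) | _::unit. 3 \<le> n}
     \<union> {(i, i + 1) | i. 3 \<le> i \<and> i \<le> n - 1 \<and> odd i}
     \<union> {(i + 1, i) | i. 3 \<le> i \<and> i \<le> n - 1 \<and> even i}"

definition xi_le :: "nat \<Rightarrow> nat \<Rightarrow> nat \<Rightarrow> bool" where
  "xi_le n i j \<longleftrightarrow> (i, j) \<in> (xi_cover n)\<^sup>*"

definition is_filter :: "nat \<Rightarrow> nat set \<Rightarrow> bool" where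
  "is_filter n F \<longleftrightarrow> F \<subseteq> {1..n} \<and>
     (\<forall>i\<in>F. \<forall>j\<in>{1..n}. xi_le n i j \<longrightarrow> j \<in> F)"

definition Omega :: "nat \<Rightarrow> nat set set" where
  "Omega n = {F. is_filter n F}"

definition R :: "nat \<Rightarrow> 'a::comm_semiring_1 \<Rightarrow> 'a" where
  "R n x = (\<Sum>F\<in>Omega n. x ^ (n - card F))"

end

(*
  Adjoining x_(n+1) to Xi_n adds a single cover relation between x_n and x_(n+1). Split
  R_n = R_in n + R_out n according to whether a filter contains x_n. If x_n is covered by
  x_(n+1), then (R_in, R_out) goes from (a, b) to (a + b, x b); if x_(n+1) is covered by
  x_n, it goes to (a, x (a + b)). From n = 2 on the two kinds of covers alternate, and both
  two-step transfer matrices have trace 1 + x + x^2 and determinant x^2, so by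
  Cayley-Hamilton R_(n+6) = (1 + x + x^2) R_(n+4) - x^2 R_(n+2). Hence multiplying the
  generating function by 1 - (1 + x + x^2) y^2 + x^2 y^4 leaves a polynomial of degree 5,
  which R_0, ..., R_5 determine.
*)

theory Submission
  imports Defs
begin

definition xi_up :: "nat \<Rightarrow> bool" where
  "xi_up n \<longleftrightarrow> odd n \<and> 3 \<le> n"

lemma mem_xi_cover:
  "(i, j) \<in> xi_cover n \<longleftrightarrow>
     (i, j) = (2, 1) \<and> 2 \<le> n \<or> (i, j) = (3, 2) \<and> 3 \<le> n \<or>
     j = Suc i \<and> 3 \<le> i \<and> j \<le> n \<and> odd i \<or> i = Suc j \<and> 3 \<le> j \<and> i \<le> n \<and> even j"
  by (auto simp: xi_cover_def)

lemma xi_cover_Suc: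
  assumes "1 \<le> n"
  shows "xi_cover (Suc n) = insert (if xi_up n then (n, Suc n) else (Suc n, n)) (xi_cover n)"
proof (rule set_eqI, clarify)
  fix i j :: nat
  show "(i, j) \<in> xi_cover (Suc n) \<longleftrightarrow>
        (i, j) \<in> insert (if xi_up n then (n, Suc n) else (Suc n, n)) (xi_cover n)"
    unfolding mem_xi_cover insert_iff xi_up_def using assms by (auto simp: le_Suc_eq)
qed

lemma xi_cover_subset: "xi_cover n \<subseteq> {1..n} \<times> {1..n}"
  by (auto simp: xi_cover_def)

lemma is_filter_iff_cover_closed:
  "is_filter n F \<longleftrightarrow> F \<subseteq> {1..n} \<and> (\<forall>(i, j) \<in> xi_cover n. i \<in> F \<longrightarrow> j \<in> F)"
proof
  assume "is_filter n F"
  then show "F \<subseteq> {1..n} \<and> (\<forall>(i, j) \<in> xi_cover n. i \<in> F \<longrightarrow> j \<in> F)"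
    using xi_cover_subset unfolding is_filter_def xi_le_def by blast
next
  assume closed: "F \<subseteq> {1..n} \<and> (\<forall>(i, j) \<in> xi_cover n. i \<in> F \<longrightarrow> j \<in> F)"
  then have "xi_cover n `` F \<subseteq> F"
    by blast
  then have "(xi_cover n)\<^sup>* `` F = F"
    by (rule Image_closed_trancl)
  with closed show "is_filter n F"
    by (auto simp: is_filter_def xi_le_def)
qed

lemma Omega_subset: "F \<in> Omega n \<Longrightarrow> F \<subseteq> {1..n}"
  by (simp add: Omega_def is_filter_def)

lemma card_le_of_in_Omega:
  assumes "F \<in> Omega n"
  shows "card F \<le> n"
proof -
  have "card F \<le> card {1..n}"
    using Omega_subset[OF assms] by (intro card_mono) simp_all
  then show ?thesis
    by simp
qed

lemma finite_Omega: "finite (Omega n)"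
proof -
  have "Omega n \<subseteq> Pow {1..n}"
    using Omega_subset by blast
  then show ?thesis
    by (rule finite_subset) simp
qed

lemma Omega_0: "Omega 0 = {{}}"
  by (simp add: Omega_def is_filter_def)

lemma Omega_1: "Omega 1 = {{}, {1}}"
proof -
  have "xi_cover 1 \<subseteq> {(1, 1)}"
    using xi_cover_subset[of 1] by simp
  moreover have "(1, 1) \<notin> xi_cover 1"
    by (simp add: mem_xi_cover)
  ultimately have "xi_cover 1 = {}"
    by blast
  then have "Omega 1 = Pow {1}"
    by (auto simp: Omega_def is_filter_iff_cover_closed)
  then show ?thesis
    by auto
qed

lemma in_Omega_Suc:
  assumes "1 \<le> n" "G \<subseteq> {1..n}"
  shows "G \<in> Omega (Suc n) \<longleftrightarrow> G \<in> Omega n \<and> (\<not> xi_up n \<or> n \<notin> G)"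
proof -
  have "Suc n \<notin> G" "G \<subseteq> {1..Suc n}"
    using assms(2) by auto
  then show ?thesis
    using assms by (simp add: Omega_def is_filter_iff_cover_closed xi_cover_Suc conj_commute)
qed

lemma insert_Suc_in_Omega_Suc:
  assumes "1 \<le> n" "G \<subseteq> {1..n}"
  shows "insert (Suc n) G \<in> Omega (Suc n) \<longleftrightarrow> G \<in> Omega n \<and> (xi_up n \<or> n \<in> G)"
proof -
  have "i \<noteq> Suc n \<and> j \<noteq> Suc n" if "(i, j) \<in> xi_cover n" for i j
    using xi_cover_subset that by fastforce
  then have "(\<forall>(i, j) \<in> xi_cover n. i \<in> insert (Suc n) G \<longrightarrow> j \<in> insert (Suc n) G) \<longleftrightarrow>
        (\<forall>(i, j) \<in> xi_cover n. i \<in> G \<longrightarrow> j \<in> G)"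
    by blast
  moreover have "insert (Suc n) G \<subseteq> {1..Suc n}"
    using assms(2) by auto
  ultimately show ?thesis
    using assms by (simp add: Omega_def is_filter_iff_cover_closed xi_cover_Suc) blast
qed

definition R_in :: "nat \<Rightarrow> 'a::comm_semiring_1 \<Rightarrow> 'a" where
  "R_in n x = (\<Sum>F \<in> {F \<in> Omega n. n \<in> F}. x ^ (n - card F))"

definition R_out :: "nat \<Rightarrow> 'a::comm_semiring_1 \<Rightarrow> 'a" where
  "R_out n x = (\<Sum>F \<in> {F \<in> Omega n. n \<notin> F}. x ^ (n - card F))"

lemma R_eq_R_in_add_R_out: "R n x = R_in n x + R_out n x"
proof -
  have "{F \<in> Omega n. n \<in> F} = Omega n \<inter> {F. n \<in> F}"
    "{F \<in> Omega n. n \<notin> F} = Omega n - {F. n \<in> F}"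
    by auto
  then show ?thesis
    unfolding R_def R_in_def R_out_def by (simp only: sum.Int_Diff[OF finite_Omega, symmetric])
qed

lemma sum_image_insert_card:
  assumes "\<And>G. G \<in> S \<Longrightarrow> a \<notin> G \<and> finite G"
  shows "(\<Sum>F \<in> insert a ` S. f (card F)) = (\<Sum>G \<in> S. f (Suc (card G)))"
proof -
  have "inj_on (insert a) S"
    using assms by (intro inj_onI) (metis insert_ident)
  then show ?thesis
    using assms by (simp add: sum.reindex)
qed

lemma R_in_Suc:
  assumes "1 \<le> n"
  shows "R_in (Suc n) x = (if xi_up n then R n x else R_in n x)"
proof -
  let ?S = "{G \<in> Omega n. xi_up n \<or> n \<in> G}"
  have G_bounds: "G \<subseteq> {1..n}" "Suc n \<notin> G" "finite G" if "G \<in> Omega n" for G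
    using Omega_subset[OF that] finite_subset[OF _ finite_atLeastAtMost] by auto
  have image: "{F \<in> Omega (Suc n). Suc n \<in> F} = insert (Suc n) ` ?S"
  proof (intro equalityI subsetI)
    fix F assume F: "F \<in> {F \<in> Omega (Suc n). Suc n \<in> F}"
    then have "F = insert (Suc n) (F - {Suc n})" "F - {Suc n} \<subseteq> {1..n}"
      using Omega_subset[of F "Suc n"] by auto
    with F insert_Suc_in_Omega_Suc[OF assms] show "F \<in> insert (Suc n) ` ?S"
      by (metis (no_types, lifting) image_eqI mem_Collect_eq)
  next
    fix F assume "F \<in> insert (Suc n) ` ?S"
    with insert_Suc_in_Omega_Suc[OF assms] G_bounds
    show "F \<in> {F \<in> Omega (Suc n). Suc n \<in> F}"
      by blast
  qed
  have "(\<Sum>F \<in> insert (Suc n) ` ?S. x ^ (Suc n - card F)) = (\<Sum>G \<in> ?S. x ^ (Suc n - Suc (card G)))"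
    using G_bounds by (intro sum_image_insert_card) auto
  then have "R_in (Suc n) x = (\<Sum>G \<in> ?S. x ^ (n - card G))"
    unfolding R_in_def image by simp
  then show ?thesis
    by (simp add: R_def R_in_def)
qed

lemma R_out_Suc:
  assumes "1 \<le> n"
  shows "R_out (Suc n) x = x * (if xi_up n then R_out n x else R n x)"
proof -
  let ?S = "{G \<in> Omega n. \<not> xi_up n \<or> n \<notin> G}"
  have "{F \<in> Omega (Suc n). Suc n \<notin> F} = ?S"
  proof (intro equalityI subsetI)
    fix F assume F: "F \<in> {F \<in> Omega (Suc n). Suc n \<notin> F}"
    then have "F \<subseteq> {1..n}"
      using Omega_subset[of F "Suc n"] by (auto simp: le_Suc_eq)
    with F in_Omega_Suc[OF assms] show "F \<in> ?S"
      by blast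
  next
    fix F assume F: "F \<in> ?S"
    then have "F \<subseteq> {1..n}"
      using Omega_subset by blast
    with F in_Omega_Suc[OF assms] show "F \<in> {F \<in> Omega (Suc n). Suc n \<notin> F}"
      by auto
  qed
  then have "R_out (Suc n) x = (\<Sum>G \<in> ?S. x * x ^ (n - card G))"
    unfolding R_out_def by (intro sum.cong) (auto simp: Suc_diff_le card_le_of_in_Omega)
  then show ?thesis
    by (simp add: R_def R_out_def sum_distrib_left)
qed

lemma R_initial_values:
  fixes x :: "'a::comm_ring_1"
  shows "R 0 x = 1" "R 1 x = 1 + x" "R 2 x = 1 + x + x^2" "R 3 x = 1 + x + x^2 + x^3"
    "R 4 x = 1 + x + 2 * x^2 + 2 * x^3 + x^4"
    "R 5 x = 1 + 2 * x + 2 * x^2 + 3 * x^3 + 2 * x^4 + x^5"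
proof -
  have up: "\<not> xi_up 1" "\<not> xi_up 2" "xi_up 3" "\<not> xi_up 4"
    by (simp_all add: xi_up_def)
  have "{F \<in> Omega 1. 1 \<in> F} = {{1}}" "{F \<in> Omega 1. 1 \<notin> F} = {{}}"
    unfolding Omega_1 by auto
  then have in1: "R_in 1 x = 1" and out1: "R_out 1 x = x"
    by (simp_all add: R_in_def R_out_def)
  have in2: "R_in 2 x = 1" and out2: "R_out 2 x = x * (1 + x)"
    using R_in_Suc[of 1 x] R_out_Suc[of 1 x] up in1 out1
    by (simp_all add: R_eq_R_in_add_R_out numeral_2_eq_2)
  have in3: "R_in 3 x = 1" and out3: "R_out 3 x = x * (1 + x * (1 + x))"
    using R_in_Suc[of 2 x] R_out_Suc[of 2 x] up in2 out2 by (simp_all add: R_eq_R_in_add_R_out)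
  have in4: "R_in 4 x = R 3 x" and out4: "R_out 4 x = x * R_out 3 x"
    using R_in_Suc[of 3 x] R_out_Suc[of 3 x] up by simp_all
  have in5: "R_in 5 x = R_in 4 x" and out5: "R_out 5 x = x * R 4 x"
    using R_in_Suc[of 4 x] R_out_Suc[of 4 x] up by simp_all
  show "R 0 x = 1"
    by (simp add: R_def Omega_0)
  show "R 1 x = 1 + x" "R 2 x = 1 + x + x^2" "R 3 x = 1 + x + x^2 + x^3"
    "R 4 x = 1 + x + 2 * x^2 + 2 * x^3 + x^4"
    "R 5 x = 1 + 2 * x + 2 * x^2 + 3 * x^3 + 2 * x^4 + x^5"
    using in1 out1 in2 out2 in3 out3 in4 out4 in5 out5 power_Suc[of x 4]
    by (simp_all add: R_eq_R_in_add_R_out algebra_simps power2_eq_square power3_eq_cube power4_eq_xxxx)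
qed

lemma xi_up_Suc: "2 \<le> n \<Longrightarrow> xi_up (Suc n) \<longleftrightarrow> \<not> xi_up n"
  unfolding xi_up_def by (cases "n = 2") auto

lemma R_recurrence:
  fixes x :: "'a::comm_ring_1"
  shows "R (n + 6) x = (1 + x + x^2) * R (n + 4) x - x^2 * R (n + 2) x"
proof -
  have step: "R_in (Suc k) x = (if xi_up k then R_in k x + R_out k x else R_in k x)"
    "R_out (Suc k) x = (if xi_up k then x * R_out k x else x * (R_in k x + R_out k x))"
    if "2 \<le> k" for k
    using that R_in_Suc[of k x] R_out_Suc[of k x] by (simp_all add: R_eq_R_in_add_R_out)
  define k where "k = n + 2"
  have "2 \<le> k" and shift: "n + 4 = Suc (Suc k)" "n + 6 = Suc (Suc (Suc (Suc k)))"
    by (simp_all add: k_def)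
  then show ?thesis
    unfolding shift k_def[symmetric] R_eq_R_in_add_R_out
    using step[of k] step[of "Suc k"] step[of "Suc (Suc k)"] step[of "Suc (Suc (Suc k))"]
      xi_up_Suc[of k] xi_up_Suc[of "Suc k"] xi_up_Suc[of "Suc (Suc k)"]
    by (cases "xi_up k") (simp_all add: algebra_simps power2_eq_square)
qed

lemma fps_mult_even_quartic_nth:
  fixes f :: "'a::comm_ring_1 fps"
  shows "fps_nth (f * (1 - fps_const c * fps_X^2 + fps_const d * fps_X^4)) n =
    fps_nth f n - c * (if n < 2 then 0 else fps_nth f (n - 2))
      + d * (if n < 4 then 0 else fps_nth f (n - 4))"
proof -
  have "f * (1 - C * Y + E * Z) = f - C * (f * Y) + E * (f * Z)" for C Y E Z :: "'a fps"
    by (simp add: algebra_simps)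
  then show ?thesis
    by (simp add: fps_X_power_mult_right_nth)
qed

lemma fps_R_times_denominator:
  fixes x :: "'a::comm_ring_1"
  defines "D \<equiv> 1 - fps_const (1 + x + x^2) * fps_X^2 + fps_const (x^2) * fps_X^4"
  shows "Abs_fps (\<lambda>n. R n x) * D =
    1 + fps_X + fps_const (x^3) * fps_X^3 - fps_const x * fps_X^4 + fps_const x * fps_X * D"
    (is "?lhs = ?rhs")
proof (rule fps_ext)
  fix n
  have lhs: "fps_nth ?lhs n = R n x - (1 + x + x^2) * (if n < 2 then 0 else R (n - 2) x)
        + x^2 * (if n < 4 then 0 else R (n - 4) x)"
    by (simp add: D_def fps_mult_even_quartic_nth)
  have rhs: "fps_nth ?rhs n = (if n = 0 then 1 else 0) + (if n = 1 then 1 + x else 0)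
      - (if n = 3 then x + x^2 else 0) - (if n = 4 then x else 0) + (if n = 5 then x^3 else 0)"
    by (auto simp: D_def mult.assoc fps_X_mult_nth algebra_simps power2_eq_square power3_eq_cube)
  show "fps_nth ?lhs n = fps_nth ?rhs n"
  proof (cases "n < 6")
    case True
    then consider "n = 0" | "n = 1" | "n = 2" | "n = 3" | "n = 4" | "n = 5"
      by linarith
    then show ?thesis
      unfolding lhs rhs using R_initial_values(2)[of x, unfolded One_nat_def] power_Suc[of x 4]
      by cases (simp_all add: R_initial_values algebra_simps power2_eq_square power3_eq_cube
          power4_eq_xxxx)
  next
    case False
    then obtain m where "n = m + 6"
      by (metis add.commute le_Suc_ex not_less)
    then show ?thesis
      unfolding lhs rhs using R_recurrence[of m x] by (simp add: add.commute)
  qed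
qed

theorem mainTheorem6:
  fixes x :: real
  shows "Abs_fps (\<lambda>n. R n x) =
     (1 + fps_X + fps_const (x^3) * fps_X^3 - fps_const x * fps_X^4)
       / (1 - fps_const (1 + x + x^2) * fps_X^2 + fps_const (x^2) * fps_X^4)
     + fps_const x * fps_X"
proof -
  define D :: "real fps" where
    "D = 1 - fps_const (1 + x + x^2) * fps_X^2 + fps_const (x^2) * fps_X^4"
  define N :: "real fps" where
    "N = 1 + fps_X + fps_const (x^3) * fps_X^3 - fps_const x * fps_X^4"
  have "fps_nth D 0 = 1"
    by (simp add: D_def)
  then have "D \<noteq> 0"
    by auto
  have "Abs_fps (\<lambda>n. R n x) = (N + fps_const x * fps_X * D) / D"
    using fps_R_times_denominator[of x, folded D_def N_def] \<open>D \<noteq> 0\<close>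
    by (metis fps_divide_times_eq)
  also have "\<dots> = N / D + fps_const x * fps_X"
    using \<open>D \<noteq> 0\<close> by (simp add: fps_divide_add fps_divide_times_eq)
  finally show ?thesis
    unfolding N_def D_def .
qed

end
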